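(* The ``vanilla'' meta-interpreter $M_0$ preserves LD-termination: for every definite program $P$ and every atomic query $Q_0\in B^E_P$, the LD-tree of $P\cup\{Q_0\}$ is finite if and only if the LD-tree of $(M_0\cup\mathit{ce}(P))\cup\{\mathit{solve}(Q_0)\}$ is finite.
   Context: Logic programs are definite; the LD-tree of $P\cup\{Q\}$ is the SLD-tree under Prolog's left-to-right selection rule. $B^E_P$ is the set of atoms of the language of $P$ modulo variance. Clause encoding: a clause body $B_1,\dots,B_n$ ($n\ge1$) is represented as the term $(B_1,(B_2,\dots,B_n))$ built with a binary functor $,/2$, and an empty body by the constant $\mathit{true}$. The clause-encoding $\mathit{ce}(P)$ is the set of facts $\mathit{clause}(H,B)$, one for each clause $H\leftarrow B$ of $P$. The symbols $,/2$, $\mathit{clause}$, $\mathit{solve}$ do not occur in the language of $P$. The ``vanilla'' meta-interpreter $M_0$ is the program $\mathit{solve}(\mathit{true}).$ $\mathit{solve}((A,B))\leftarrow \mathit{solve}(A),\mathit{solve}(B).$ $\mathit{solve}(H)\leftarrow \mathit{clause}(H,B),\mathit{solve}(B).$ *)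

theory Defs
  imports Main
begin

text \<open>Terms (and atoms, which are represented as compound terms whose head
symbol is a predicate symbol) over symbols of type 'f with variables
indexed by natural numbers.\<close>

datatype 'f trm = Var nat | Fn 'f "'f trm list"

type_synonym 'f subst = "nat \<Rightarrow> 'f trm"

fun subst_trm :: "'f subst \<Rightarrow> 'f trm \<Rightarrow> 'f trm" where
  "subst_trm \<sigma> (Var x) = \<sigma> x"
| "subst_trm \<sigma> (Fn f ts) = Fn f (map (subst_trm \<sigma>) ts)"

fun vars_trm :: "'f trm \<Rightarrow> nat set" where
  "vars_trm (Var x) = {x}"
| "vars_trm (Fn f ts) = \<Union> (set (map vars_trm ts))"

definition is_unifier :: "'f subst \<Rightarrow> 'f trm \<Rightarrow> 'f trm \<Rightarrow> bool" where
  "is_unifier \<sigma> s t \<longleftrightarrow> subst_trm \<sigma> s = subst_trm \<sigma> t"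

definition is_mgu :: "'f subst \<Rightarrow> 'f trm \<Rightarrow> 'f trm \<Rightarrow> bool" where
  "is_mgu \<sigma> s t \<longleftrightarrow> is_unifier \<sigma> s t \<and>
     (\<forall>\<tau>. is_unifier \<tau> s t \<longrightarrow> (\<exists>\<delta>. \<forall>x. \<tau> x = subst_trm \<delta> (\<sigma> x)))"

text \<open>A clause H <- B1,...,Bn is a pair (H, [B1,...,Bn]); a program is a
(finite) list of clauses; a goal is a list of atoms.\<close>

type_synonym 'f clause = "'f trm \<times> 'f trm list"

definition is_atom :: "'f trm \<Rightarrow> bool" where
  "is_atom A \<longleftrightarrow> (\<exists>p ts. A = Fn p ts)"

definition definite_program :: "'f clause list \<Rightarrow> bool" where
  "definite_program P \<longleftrightarrow> (\<forall>(H, B) \<in> set P. is_atom H \<and> (\<forall>A \<in> set B. is_atom A))"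

definition vars_goal :: "'f trm list \<Rightarrow> nat set" where
  "vars_goal G = \<Union> (set (map vars_trm G))"

definition rename_clause :: "(nat \<Rightarrow> nat) \<Rightarrow> 'f clause \<Rightarrow> 'f clause" where
  "rename_clause \<rho> c = (subst_trm (Var \<circ> \<rho>) (fst c), map (subst_trm (Var \<circ> \<rho>)) (snd c))"

text \<open>One LD-resolution step (leftmost selection rule) from goal G using the
i-th clause of P: a variant of the clause, standardised apart from G, is
resolved with the leftmost atom via an mgu.\<close>

definition ld_step :: "'f clause list \<Rightarrow> 'f trm list \<Rightarrow> nat \<Rightarrow> 'f trm list \<Rightarrow> bool" where
  "ld_step P G i G' \<longleftrightarrow> i < length P \<and>
     (\<exists>A R \<rho> H B \<theta>. G = A # R \<and> inj \<rho> \<and> rename_clause \<rho> (P ! i) = (H, B) \<and>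
        (vars_trm H \<union> vars_goal B) \<inter> vars_goal G = {} \<and>
        is_mgu \<theta> A H \<and> G' = map (subst_trm \<theta>) (B @ R))"

inductive ld_path :: "'f clause list \<Rightarrow> 'f trm list \<Rightarrow> nat list \<Rightarrow> 'f trm list \<Rightarrow> bool"
  for P where
  Nil: "ld_path P G [] G"
| Cons: "ld_step P G i G1 \<Longrightarrow> ld_path P G1 is G' \<Longrightarrow> ld_path P G (i # is) G'"

text \<open>The nodes of the LD-tree of P \<union> {G} are identified with the sequences of
clause choices (branch addresses) along which an LD-derivation from G exists;
the LD-tree is finite iff it has finitely many nodes.\<close>

definition ld_tree_nodes :: "'f clause list \<Rightarrow> 'f trm list \<Rightarrow> nat list set" where
  "ld_tree_nodes P G = {is. \<exists>G'. ld_path P G is G'}"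

definition ld_tree_finite :: "'f clause list \<Rightarrow> 'f trm list \<Rightarrow> bool" where
  "ld_tree_finite P G \<longleftrightarrow> finite (ld_tree_nodes P G)"

text \<open>Symbols of the meta-level language: those of P plus the fresh symbols
true, ','/2, clause/2, solve/1, which do not occur in the language of P.\<close>

datatype 'f msym = Orig 'f | TrueS | CommaS | ClauseS | SolveS

definition lift :: "'f trm \<Rightarrow> 'f msym trm" where
  "lift t = map_trm Orig t"

fun encode_body :: "'f msym trm list \<Rightarrow> 'f msym trm" where
  "encode_body [] = Fn TrueS []"
| "encode_body [B] = B"
| "encode_body (B # Bs) = Fn CommaS [B, encode_body Bs]"

definition ce :: "'f clause list \<Rightarrow> 'f msym clause list" where
  "ce P = map (\<lambda>(H, B). (Fn ClauseS [lift H, encode_body (map lift B)], [])) P"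

definition solve :: "'f msym trm \<Rightarrow> 'f msym trm" where
  "solve t = Fn SolveS [t]"

definition M0 :: "'f msym clause list" where
  "M0 = [ (solve (Fn TrueS []), []),
          (solve (Fn CommaS [Var 0, Var 1]), [solve (Var 0), solve (Var 1)]),
          (solve (Var 0), [Fn ClauseS [Var 0, Var 1], solve (Var 1)]) ]"

end

(*
  An object goal A1, ..., An is represented by meta goals solve(c1), ..., solve(ck), where the
  ci are conjunctions of lifted atoms built with true and ','/2.

  Object to meta: an LD step of P on A1 is simulated by finitely many meta steps. The first two
  clauses of M0 decompose conjunctions until solve(A1) is selected; the third clause turns it
  into clause(A1, b), solve(b), and the encoding of the clause used by P resolves clause(A1, b)
  with the same mgu (lifted, plus a binding of b to the encoded body). So an infinite branch of
  the LD-tree of P yields an infinite branch of the meta tree.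

  Meta to object: a meta derivation projects to an LD-derivation of P. A step with M0 either
  reaches a dead end (clause(true, _) and clause((_, _), _) match no encoded clause) or lowers
  the weight of the goal, i.e. the number of decomposition steps still pending; a step with an
  encoded clause is an LD step of P and raises the weight by at most a constant K. Hence a meta
  derivation of length m projects to one of length n with m <= 1 + w + (K + 1) n. The mgus are
  transported between the two levels by abstracting meta subterms to fresh variables.

  Both trees are finitely branching, so in both directions finiteness is bounded depth.
*)

theory Submission
  imports Defs
begin

abbreviation ren :: "(nat \<Rightarrow> nat) \<Rightarrow> 'f trm \<Rightarrow> 'f trm" where
  "ren \<pi> t \<equiv> subst_trm (Var \<circ> \<pi>) t"

lemma subst_trm_subst_trm: "subst_trm \<sigma> (subst_trm \<tau> t) = subst_trm (\<lambda>x. subst_trm \<sigma> (\<tau> x)) t"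
  by (induction t) auto

lemma subst_trm_cong: "(\<And>x. x \<in> vars_trm t \<Longrightarrow> \<sigma> x = \<tau> x) \<Longrightarrow> subst_trm \<sigma> t = subst_trm \<tau> t"
  by (induction t) auto

lemma subst_trm_eq_imp_agree: "subst_trm \<sigma> t = subst_trm \<tau> t \<Longrightarrow> x \<in> vars_trm t \<Longrightarrow> \<sigma> x = \<tau> x"
  by (induction t) auto

lemma subst_trm_Var [simp]: "subst_trm Var t = t"
  by (induction t) (auto simp: map_idI)

lemma subst_trm_id_on_vars: "(\<And>x. x \<in> vars_trm t \<Longrightarrow> \<sigma> x = Var x) \<Longrightarrow> subst_trm \<sigma> t = t"
  using subst_trm_cong[of t \<sigma> Var] by simp

lemma finite_vars_trm [simp]: "finite (vars_trm t)"
  by (induction t) auto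

lemma vars_subst_trm: "vars_trm (subst_trm \<sigma> t) = (\<Union>x\<in>vars_trm t. vars_trm (\<sigma> x))"
  by (induction t) auto

lemma vars_ren [simp]: "vars_trm (ren \<pi> t) = \<pi> ` vars_trm t"
  by (induction t) auto

lemma vars_goal_simps [simp]:
  "vars_goal [] = {}" "vars_goal (A # G) = vars_trm A \<union> vars_goal G"
  "vars_goal (G @ G') = vars_goal G \<union> vars_goal G'"
  by (auto simp: vars_goal_def)

lemma finite_vars_goal [simp]: "finite (vars_goal G)"
  by (induction G) auto

lemma vars_goal_map_subst_trm:
  "vars_goal (map (subst_trm \<sigma>) G) = (\<Union>x\<in>vars_goal G. vars_trm (\<sigma> x))"
  by (induction G) (auto simp: vars_subst_trm)

lemma vars_goal_ren [simp]: "vars_goal (map (ren \<pi>) G) = \<pi> ` vars_goal G"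
  by (auto simp: vars_goal_map_subst_trm)

lemma map_subst_trm_cong:
  "(\<And>x. x \<in> vars_goal G \<Longrightarrow> \<sigma> x = \<tau> x) \<Longrightarrow> map (subst_trm \<sigma>) G = map (subst_trm \<tau>) G"
  by (induction G) (auto intro: subst_trm_cong)

lemma map_subst_trm_id_on_vars:
  "(\<And>x. x \<in> vars_goal G \<Longrightarrow> \<sigma> x = Var x) \<Longrightarrow> map (subst_trm \<sigma>) G = G"
  using map_subst_trm_cong[of G \<sigma> Var] by (simp add: map_idI)

lemma is_atom_subst_trm: "is_atom A \<Longrightarrow> is_atom (subst_trm \<sigma> A)"
  by (auto simp: is_atom_def)

lemma exists_fresh_bound: "finite V \<Longrightarrow> \<exists>N. \<forall>y\<in>V. y < (N::nat)"
  using finite_nat_set_iff_bounded by auto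

lemma inj_on_extend_bij:
  fixes \<pi> :: "nat \<Rightarrow> nat"
  assumes fin: "finite X" and inj: "inj_on \<pi> X"
  shows "\<exists>\<kappa>. bij \<kappa> \<and> (\<forall>x\<in>X. \<kappa> x = \<pi> x)"
proof -
  define C where "C = X \<union> \<pi> ` X"
  have "card (C - X) = card (C - \<pi> ` X)"
    using fin inj by (simp add: card_Diff_subset C_def card_image)
  then obtain g where g: "bij_betw g (C - X) (C - \<pi> ` X)"
    using finite_same_card_bij fin by (metis C_def finite_Diff finite_Un finite_imageI)
  define \<kappa> where "\<kappa> x = (if x \<in> X then \<pi> x else if x \<in> C then g x else x)" for x
  have "bij_betw \<kappa> X (\<pi> ` X)"
    using inj by (auto simp: bij_betw_def \<kappa>_def inj_on_def image_def)
  moreover have "bij_betw \<kappa> (C - X) (C - \<pi> ` X)"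
    using g by (rule bij_betw_cong[THEN iffD1, rotated]) (auto simp: \<kappa>_def)
  ultimately have "bij_betw \<kappa> C C"
    using bij_betw_combine[of \<kappa> X "\<pi> ` X" "C - X" "C - \<pi> ` X"] by (auto simp: C_def Un_absorb1)
  moreover have "bij_betw \<kappa> (- C) (- C)"
    using bij_betw_id[of "- C"] by (rule bij_betw_cong[THEN iffD1, rotated]) (auto simp: \<kappa>_def C_def)
  ultimately have "bij_betw \<kappa> (C \<union> - C) (C \<union> - C)"
    by (rule bij_betw_combine) simp
  then show ?thesis by (auto simp: \<kappa>_def)
qed

lemma is_mgu_unifies: "is_mgu \<theta> s t \<Longrightarrow> subst_trm \<theta> s = subst_trm \<theta> t"
  by (simp add: is_mgu_def is_unifier_def)

lemma is_mgu_matcher: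
  assumes match: "subst_trm \<sigma> t = s"
    and fix_s: "\<And>x. x \<in> vars_trm s \<Longrightarrow> \<sigma> x = Var x"
    and fix_outside: "\<And>x. x \<notin> vars_trm t \<Longrightarrow> \<sigma> x = Var x"
  shows "is_mgu \<sigma> s t"
  unfolding is_mgu_def
proof (intro conjI allI impI)
  show "is_unifier \<sigma> s t"
    using match subst_trm_id_on_vars[OF fix_s] by (simp add: is_unifier_def)
  fix \<tau> assume "is_unifier \<tau> s t"
  then have "subst_trm (\<lambda>x. subst_trm \<tau> (\<sigma> x)) t = subst_trm \<tau> t"
    using match by (metis is_unifier_def subst_trm_subst_trm)
  then have "\<tau> x = subst_trm \<tau> (\<sigma> x)" for x
    using subst_trm_eq_imp_agree fix_outside by (cases "x \<in> vars_trm t") force+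
  then show "\<exists>\<delta>. \<forall>x. \<tau> x = subst_trm \<delta> (\<sigma> x)" by blast
qed

lemma is_mgu_ren:
  assumes "bij \<kappa>" "is_mgu \<theta> s t"
  shows "is_mgu (\<lambda>y. ren \<kappa> (\<theta> (inv \<kappa> y))) (ren \<kappa> s) (ren \<kappa> t)"
proof -
  let ?\<sigma> = "\<lambda>y. ren \<kappa> (\<theta> (inv \<kappa> y))"
  have inv: "inv \<kappa> (\<kappa> x) = x" for x using assms(1) by (simp add: bij_is_inj)
  have sr: "subst_trm ?\<sigma> (ren \<kappa> u) = ren \<kappa> (subst_trm \<theta> u)" for u
    by (simp add: subst_trm_subst_trm inv o_def)
  show ?thesis unfolding is_mgu_def
  proof (intro conjI allI impI)
    show "is_unifier ?\<sigma> (ren \<kappa> s) (ren \<kappa> t)"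
      using assms(2) by (simp add: sr is_unifier_def is_mgu_def)
    fix \<tau> assume "is_unifier \<tau> (ren \<kappa> s) (ren \<kappa> t)"
    then have "is_unifier (\<tau> \<circ> \<kappa>) s t" by (simp add: is_unifier_def subst_trm_subst_trm o_def)
    then obtain \<delta> where d: "\<And>x. \<tau> (\<kappa> x) = subst_trm \<delta> (\<theta> x)"
      using assms(2) unfolding is_mgu_def by auto
    have "\<tau> y = subst_trm (\<delta> \<circ> inv \<kappa>) (?\<sigma> y)" for y
    proof -
      have "\<tau> y = \<tau> (\<kappa> (inv \<kappa> y))" using assms(1) by (simp add: bij_is_surj surj_f_inv_f)
      also have "\<dots> = subst_trm \<delta> (\<theta> (inv \<kappa> y))" by (rule d)
      also have "\<dots> = subst_trm (\<delta> \<circ> inv \<kappa>) (?\<sigma> y)" by (simp add: subst_trm_subst_trm inv o_def)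
      finally show ?thesis .
    qed
    then show "\<exists>\<delta>. \<forall>x. \<tau> x = subst_trm \<delta> (?\<sigma> x)" by blast
  qed
qed

text \<open>Outside \<open>W\<close>, \<open>\<sigma>\<close> is replaced by a shift to variables beyond those of \<open>\<sigma> ` W\<close>.\<close>

lemma is_mgu_if_most_general_on:
  assumes unif: "is_unifier \<sigma> s t" and fin: "finite W" and vars_st: "vars_trm s \<union> vars_trm t \<subseteq> W"
    and general: "\<And>\<tau>. is_unifier \<tau> s t \<Longrightarrow> \<exists>\<delta>. \<forall>x\<in>W. \<tau> x = subst_trm \<delta> (\<sigma> x)"
  shows "\<exists>\<sigma>'. is_mgu \<sigma>' s t \<and> (\<forall>x\<in>W. \<sigma>' x = \<sigma> x)"
proof -
  obtain N where N: "\<And>x y. x \<in> W \<Longrightarrow> y \<in> vars_trm (\<sigma> x) \<Longrightarrow> y < N"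
    using exists_fresh_bound[of "\<Union>x\<in>W. vars_trm (\<sigma> x)"] fin by auto
  define \<sigma>' where "\<sigma>' x = (if x \<in> W then \<sigma> x else Var (N + x))" for x
  have "subst_trm \<sigma>' s = subst_trm \<sigma> s" "subst_trm \<sigma>' t = subst_trm \<sigma> t"
    by (rule subst_trm_cong, use vars_st in \<open>force simp: \<sigma>'_def\<close>)+
  then have "is_unifier \<sigma>' s t" using unif by (simp add: is_unifier_def)
  moreover have "\<exists>\<delta>. \<forall>x. \<tau> x = subst_trm \<delta> (\<sigma>' x)" if unif_\<tau>: "is_unifier \<tau> s t" for \<tau>
  proof -
    obtain \<delta> where \<delta>: "\<forall>x\<in>W. \<tau> x = subst_trm \<delta> (\<sigma> x)" using general[OF unif_\<tau>] by blast
    define \<delta>' where "\<delta>' y = (if y < N then \<delta> y else \<tau> (y - N))" for y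
    have "\<tau> x = subst_trm \<delta>' (\<sigma>' x)" for x
    proof (cases "x \<in> W")
      case True
      have "subst_trm \<delta>' (\<sigma> x) = subst_trm \<delta> (\<sigma> x)"
        by (rule subst_trm_cong) (simp add: \<delta>'_def N[OF True])
      then show ?thesis using True \<delta> by (simp add: \<sigma>'_def)
    qed (simp add: \<sigma>'_def \<delta>'_def)
    then show ?thesis by blast
  qed
  ultimately show ?thesis unfolding is_mgu_def by (auto simp: \<sigma>'_def)
qed

lemma is_mgu_renaming_on:
  assumes "is_mgu \<theta> s t" "is_unifier \<sigma> s t" "\<And>x. x \<in> X \<Longrightarrow> \<sigma> x = Var x"
  shows "\<exists>\<pi>. (\<forall>x\<in>X. \<theta> x = Var (\<pi> x)) \<and> inj_on \<pi> X"
proof -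
  obtain \<delta> where \<delta>: "\<And>x. \<sigma> x = subst_trm \<delta> (\<theta> x)"
    using assms(1,2) unfolding is_mgu_def by blast
  have "\<exists>z. \<theta> x = Var z \<and> \<delta> z = Var x" if "x \<in> X" for x
    using \<delta>[of x] assms(3)[OF that] by (cases "\<theta> x") auto
  then obtain \<pi> where "\<forall>x\<in>X. \<theta> x = Var (\<pi> x) \<and> \<delta> (\<pi> x) = Var x"
    by metis
  then show ?thesis by (metis inj_onI trm.inject(1))
qed

lemma lift_simps [simp]: "lift (Var x) = Var x" "lift (Fn f ts) = Fn (Orig f) (map lift ts)"
  by (auto simp: lift_def)

lemma vars_lift [simp]: "vars_trm (lift t) = vars_trm t"
  by (induction t) auto

lemma lift_subst_trm: "lift (subst_trm \<sigma> t) = subst_trm (lift \<circ> \<sigma>) (lift t)"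
  by (induction t) auto

lemma subst_trm_lift_comp: "subst_trm (lift \<circ> \<theta>) (lift t) = lift (subst_trm \<theta> t)"
  by (simp add: lift_subst_trm)

lemma ren_lift: "ren \<rho> (lift t) = lift (ren \<rho> t)"
  by (simp add: lift_subst_trm o_def)

lemma subst_trm_lift_atom: "is_atom A \<Longrightarrow> \<exists>p ts. subst_trm \<theta> (lift A) = Fn (Orig p) ts"
  by (auto simp: is_atom_def)

text \<open>\<open>unlift\<close> inverts \<open>lift\<close> on terms built from object symbols only; other symbols are
mapped to \<open>undefined\<close>.\<close>

definition unlift_sym :: "'f msym \<Rightarrow> 'f" where
  "unlift_sym s = (case s of Orig f \<Rightarrow> f | _ \<Rightarrow> undefined)"

definition unlift :: "'f msym trm \<Rightarrow> 'f trm" where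
  "unlift u = map_trm unlift_sym u"

lemma unlift_simps [simp]: "unlift (Var x) = Var x" "unlift (Fn f ts) = Fn (unlift_sym f) (map unlift ts)"
  by (auto simp: unlift_def)

lemma unlift_lift [simp]: "unlift (lift t) = t"
  by (induction t) (auto simp: unlift_sym_def map_idI)

lemma unlift_comp_lift [simp]: "unlift \<circ> lift = id"
  by (simp add: fun_eq_iff)

lemma unlift_subst_trm: "unlift (subst_trm \<sigma> u) = subst_trm (unlift \<circ> \<sigma>) (unlift u)"
  by (induction u) auto

fun object_trm :: "'f msym trm \<Rightarrow> bool" where
  "object_trm (Var x) = True"
| "object_trm (Fn f ts) = ((\<exists>g. f = Orig g) \<and> (\<forall>t\<in>set ts. object_trm t))"

lemma object_trm_lift [simp]: "object_trm (lift t)"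
  by (induction t) auto

lemma lift_unlift: "object_trm u \<Longrightarrow> lift (unlift u) = u"
  by (induction u) (auto simp: unlift_sym_def map_idI)

lemma object_trm_subst_trmD: "object_trm (subst_trm \<delta> u) \<Longrightarrow> object_trm u"
  by (induction u) auto

lemma subst_trm_lift_object:
  "(\<And>x. x \<in> vars_trm t \<Longrightarrow> object_trm (\<sigma> x)) \<Longrightarrow>
   subst_trm \<sigma> (lift t) = lift (subst_trm (unlift \<circ> \<sigma>) t)"
  by (induction t) (auto simp: lift_unlift)

fun subterms :: "'a trm \<Rightarrow> 'a trm set" where
  "subterms (Var x) = {Var x}"
| "subterms (Fn f ts) = insert (Fn f ts) (\<Union> (set (map subterms ts)))"

lemma finite_subterms [simp]: "finite (subterms t)"
  by (induction t) auto

fun abstract_meta :: "('f msym trm \<Rightarrow> nat) \<Rightarrow> nat \<Rightarrow> 'f msym trm \<Rightarrow> 'f trm" where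
  "abstract_meta c N (Var y) = Var y"
| "abstract_meta c N (Fn f ts) =
     (case f of Orig g \<Rightarrow> Fn g (map (abstract_meta c N) ts) | _ \<Rightarrow> Var (N + c (Fn f ts)))"

lemma abstract_meta_subst_trm_lift:
  "abstract_meta c N (subst_trm \<tau> (lift s)) = subst_trm (abstract_meta c N \<circ> \<tau>) s"
  by (induction s) auto

lemma subst_trm_lift_abstract_meta:
  assumes "subterms u \<subseteq> S" "inj_on c S" "\<forall>y\<in>vars_trm u. y < N"
  shows "subst_trm (\<lambda>z. if N \<le> z \<and> z - N \<in> c ` S then inv_into S c (z - N) else Var z)
           (lift (abstract_meta c N u)) = u"
  using assms
proof (induction u)
  case (Fn f ts)
  have "\<forall>t\<in>set ts. subst_trm (\<lambda>z. if N \<le> z \<and> z - N \<in> c ` S then inv_into S c (z - N) else Var z)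
          (lift (abstract_meta c N t)) = t"
    using Fn.prems by (intro ballI Fn.IH) auto
  with Fn.prems show ?case
    by (cases f) (auto intro!: map_idI)
qed simp

text \<open>An object mgu stays most general for the lifted terms, even against unifiers
that use meta symbols: these can be abstracted to fresh variables, giving an object
unifier, which factors through \<open>\<theta>\<close>.\<close>

lemma lift_mgu_most_general_on:
  assumes mgu: "is_mgu \<theta> s t" and fin: "finite W"
    and unif: "subst_trm \<tau> (lift s) = subst_trm \<tau> (lift t)"
  shows "\<exists>\<delta>. \<forall>x\<in>W. \<tau> x = subst_trm \<delta> (lift (\<theta> x))"
proof -
  define S where "S = (\<Union>x\<in>W. subterms (\<tau> x))"
  obtain c :: "'a msym trm \<Rightarrow> nat" where c: "inj_on c S"
    using finite_imp_inj_to_nat_seg[of S] fin by (auto simp: S_def)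
  obtain N where N: "\<And>x y. x \<in> W \<Longrightarrow> y \<in> vars_trm (\<tau> x) \<Longrightarrow> y < N"
    using exists_fresh_bound[of "\<Union>x\<in>W. vars_trm (\<tau> x)"] fin by auto
  define \<rho> where "\<rho> z = (if N \<le> z \<and> z - N \<in> c ` S then inv_into S c (z - N) else Var z)" for z
  have "is_unifier (abstract_meta c N \<circ> \<tau>) s t"
    using unif unfolding is_unifier_def by (metis abstract_meta_subst_trm_lift)
  then obtain \<delta> where \<delta>: "\<And>x. abstract_meta c N (\<tau> x) = subst_trm \<delta> (\<theta> x)"
    using mgu unfolding is_mgu_def by (metis comp_apply)
  have "\<tau> x = subst_trm (\<lambda>y. subst_trm \<rho> (lift (\<delta> y))) (lift (\<theta> x))" if x: "x \<in> W" for x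
  proof -
    have "subst_trm (\<lambda>y. subst_trm \<rho> (lift (\<delta> y))) (lift (\<theta> x))
        = subst_trm \<rho> (lift (subst_trm \<delta> (\<theta> x)))"
      by (simp add: lift_subst_trm subst_trm_subst_trm o_def)
    also have "\<dots> = subst_trm \<rho> (lift (abstract_meta c N (\<tau> x)))" by (simp add: \<delta>)
    also have "\<dots> = \<tau> x" unfolding \<rho>_def
      by (rule subst_trm_lift_abstract_meta) (use x N c in \<open>auto simp: S_def\<close>)
    finally show ?thesis by simp
  qed
  then show ?thesis by blast
qed

lemma is_unifier_clause_lift:
  assumes "is_unifier \<tau> A H" "b \<notin> vars_trm A \<union> vars_trm H \<union> vars_trm E"
  shows "is_unifier ((lift \<circ> \<tau>)(b := subst_trm (lift \<circ> \<tau>) E))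
           (Fn ClauseS [lift A, Var b]) (Fn ClauseS [lift H, E])"
proof -
  let ?\<sigma> = "(lift \<circ> \<tau>)(b := subst_trm (lift \<circ> \<tau>) E)"
  have "subst_trm ?\<sigma> (lift A) = lift (subst_trm \<tau> A)" "subst_trm ?\<sigma> (lift H) = lift (subst_trm \<tau> H)"
    by (rule trans[OF subst_trm_cong subst_trm_lift_comp], use assms(2) in auto)+
  moreover have "subst_trm ?\<sigma> E = subst_trm (lift \<circ> \<tau>) E"
    by (rule subst_trm_cong) (use assms(2) in auto)
  ultimately show ?thesis
    using assms(1) by (simp add: is_unifier_def)
qed

lemma is_mgu_clause_lift:
  assumes mgu: "is_mgu \<theta> A H"
    and fin: "finite W" and W: "vars_trm A \<union> vars_trm H \<union> vars_trm E \<subseteq> W" and b: "b \<notin> W"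
  shows "\<exists>\<theta>'. is_mgu \<theta>' (Fn ClauseS [lift A, Var b]) (Fn ClauseS [lift H, E]) \<and>
           \<theta>' b = subst_trm (lift \<circ> \<theta>) E \<and> (\<forall>x\<in>W. \<theta>' x = lift (\<theta> x))"
proof -
  define \<sigma> where "\<sigma> = (lift \<circ> \<theta>)(b := subst_trm (lift \<circ> \<theta>) E)"
  have unif: "is_unifier \<sigma> (Fn ClauseS [lift A, Var b]) (Fn ClauseS [lift H, E])"
    unfolding \<sigma>_def using mgu W b by (intro is_unifier_clause_lift) (auto simp: is_mgu_def)
  have "\<exists>\<delta>. \<forall>x\<in>insert b W. \<tau> x = subst_trm \<delta> (\<sigma> x)"
    if "is_unifier \<tau> (Fn ClauseS [lift A, Var b]) (Fn ClauseS [lift H, E])" for \<tau>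
  proof -
    have \<tau>: "subst_trm \<tau> (lift A) = subst_trm \<tau> (lift H)" "\<tau> b = subst_trm \<tau> E"
      using that by (auto simp: is_unifier_def)
    obtain \<delta> where \<delta>: "\<forall>x\<in>W. \<tau> x = subst_trm \<delta> (lift (\<theta> x))"
      using lift_mgu_most_general_on[OF mgu fin \<tau>(1)] by blast
    have "\<tau> b = subst_trm (\<lambda>y. subst_trm \<delta> (lift (\<theta> y))) E"
      unfolding \<tau>(2) by (rule subst_trm_cong) (use \<delta> W in auto)
    then have "\<tau> b = subst_trm \<delta> (\<sigma> b)"
      by (simp add: \<sigma>_def subst_trm_subst_trm)
    moreover have "\<tau> x = subst_trm \<delta> (\<sigma> x)" if "x \<in> W" "x \<noteq> b" for x
      using \<delta> that by (simp add: \<sigma>_def)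
    ultimately show ?thesis by blast
  qed
  then have "\<exists>\<theta>'. is_mgu \<theta>' (Fn ClauseS [lift A, Var b]) (Fn ClauseS [lift H, E]) \<and>
      (\<forall>x\<in>insert b W. \<theta>' x = \<sigma> x)"
    by (intro is_mgu_if_most_general_on[OF unif]) (use fin W in auto)
  then show ?thesis using b by (auto simp: \<sigma>_def)
qed

lemma is_mgu_clause_unlift:
  assumes mgu: "is_mgu \<theta> (Fn ClauseS [lift A, Var b]) (Fn ClauseS [lift H, E])"
    and fin: "finite W" and W: "vars_trm A \<union> vars_trm H \<subseteq> W" "b \<notin> W" and b: "b \<notin> vars_trm E"
  shows "\<forall>x. x \<noteq> b \<longrightarrow> object_trm (\<theta> x)"
    and "\<exists>\<theta>0. is_mgu \<theta>0 A H \<and> (\<forall>x\<in>W. \<theta>0 x = unlift (\<theta> x))"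
proof -
  have factor: "\<exists>\<delta>. \<forall>x. x \<noteq> b \<longrightarrow> lift (\<tau> x) = subst_trm \<delta> (\<theta> x)"
    if "is_unifier \<tau> A H" for \<tau>
  proof -
    have "is_unifier ((lift \<circ> \<tau>)(b := subst_trm (lift \<circ> \<tau>) E))
        (Fn ClauseS [lift A, Var b]) (Fn ClauseS [lift H, E])"
      using that W b by (intro is_unifier_clause_lift) auto
    then obtain \<delta> where "\<forall>x. ((lift \<circ> \<tau>)(b := subst_trm (lift \<circ> \<tau>) E)) x = subst_trm \<delta> (\<theta> x)"
      using mgu unfolding is_mgu_def by blast
    then show ?thesis by (metis comp_apply fun_upd_other)
  qed
  have "unlift (subst_trm \<theta> (lift A)) = unlift (subst_trm \<theta> (lift H))"
    using is_mgu_unifies[OF mgu] by simp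
  then have unif: "is_unifier (unlift \<circ> \<theta>) A H"
    by (simp add: is_unifier_def unlift_subst_trm)
  show "\<forall>x. x \<noteq> b \<longrightarrow> object_trm (\<theta> x)"
    using factor[OF unif] by (metis object_trm_lift object_trm_subst_trmD)
  have "\<exists>\<delta>. \<forall>x\<in>W. \<tau> x = subst_trm \<delta> ((unlift \<circ> \<theta>) x)" if unif_\<tau>: "is_unifier \<tau> A H" for \<tau>
  proof -
    obtain \<delta> where \<delta>: "\<forall>x. x \<noteq> b \<longrightarrow> lift (\<tau> x) = subst_trm \<delta> (\<theta> x)"
      using factor[OF unif_\<tau>] by blast
    have "\<tau> x = subst_trm (unlift \<circ> \<delta>) (unlift (\<theta> x))" if "x \<in> W" for x
      using arg_cong[OF \<delta>[rule_format, of x], of unlift] W(2) that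
      by (auto simp: unlift_subst_trm)
    then show ?thesis by auto
  qed
  then show "\<exists>\<theta>0. is_mgu \<theta>0 A H \<and> (\<forall>x\<in>W. \<theta>0 x = unlift (\<theta> x))"
    using is_mgu_if_most_general_on[OF unif fin] W by auto
qed

lemma ld_stepI:
  "i < length P \<Longrightarrow> inj \<rho> \<Longrightarrow> rename_clause \<rho> (P ! i) = (H, B) \<Longrightarrow>
   (vars_trm H \<union> vars_goal B) \<inter> vars_goal (A # R) = {} \<Longrightarrow> is_mgu \<theta> A H \<Longrightarrow>
   G' = map (subst_trm \<theta>) (B @ R) \<Longrightarrow> ld_step P (A # R) i G'"
  unfolding ld_step_def by blast

lemma ld_step_ConsE:
  assumes "ld_step P (A # R) i G'"
  obtains \<rho> H B \<theta> where "i < length P" "inj \<rho>" "rename_clause \<rho> (P ! i) = (H, B)"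
    "(vars_trm H \<union> vars_goal B) \<inter> vars_goal (A # R) = {}" "is_mgu \<theta> A H"
    "G' = map (subst_trm \<theta>) (B @ R)"
  using assms that unfolding ld_step_def by fastforce

lemma ld_step_Nil: "\<not> ld_step P [] i G'"
  by (simp add: ld_step_def)

text \<open>The variant of the clause is its shift by \<open>N\<close>, so the head variables are bound by the
matcher \<open>\<mu>\<close> and the variables occurring only in the body stay shifted.\<close>

lemma ld_step_by_matching:
  assumes i: "i < length P" and clause: "P ! i = (H, B)"
    and match: "subst_trm \<mu> H = A" and fresh: "\<forall>y\<in>vars_goal (A # R). y < N"
    and G': "G' = map (subst_trm (\<lambda>x. if x \<in> vars_trm H then \<mu> x else Var (N + x))) B @ R"
  shows "ld_step P (A # R) i G'"
proof -
  define \<rho> :: "nat \<Rightarrow> nat" where "\<rho> x = N + x" for x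
  define \<theta> where "\<theta> y = (if N \<le> y \<and> y - N \<in> vars_trm H then \<mu> (y - N) else Var y)" for y
  let ?\<mu>' = "\<lambda>x. if x \<in> vars_trm H then \<mu> x else Var (N + x)"
  have "\<theta> (\<rho> x) = ?\<mu>' x" for x
    by (simp add: \<theta>_def \<rho>_def)
  then have \<theta>_ren: "subst_trm \<theta> (ren \<rho> t) = subst_trm ?\<mu>' t" for t
    by (simp add: subst_trm_subst_trm)
  have "subst_trm ?\<mu>' H = subst_trm \<mu> H"
    by (rule subst_trm_cong) simp
  then have "subst_trm \<theta> (ren \<rho> H) = A"
    by (simp add: \<theta>_ren match)
  moreover have "\<theta> x = Var x" if "x \<in> vars_goal (A # R)" for x
    using bspec[OF fresh that] by (simp add: \<theta>_def)
  moreover have "\<theta> y = Var y" if "y \<notin> vars_trm (ren \<rho> H)" for y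
    using that by (auto simp: \<theta>_def \<rho>_def image_iff)
  ultimately have mgu: "is_mgu \<theta> A (ren \<rho> H)" and "map (subst_trm \<theta>) R = R"
    by (auto intro: is_mgu_matcher map_subst_trm_id_on_vars)
  then have resolvent: "G' = map (subst_trm \<theta>) (map (ren \<rho>) B @ R)"
    by (simp add: G' \<theta>_ren)
  have "inj \<rho>" by (simp add: \<rho>_def inj_on_def)
  moreover have "rename_clause \<rho> (P ! i) = (ren \<rho> H, map (ren \<rho>) B)"
    using clause by (simp add: rename_clause_def)
  moreover have "(vars_trm (ren \<rho> H) \<union> vars_goal (map (ren \<rho>) B)) \<inter> vars_goal (A # R) = {}"
    using fresh by (auto simp: \<rho>_def)
  ultimately show ?thesis
    using ld_stepI[OF i _ _ _ mgu resolvent] by blast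
qed

lemma ld_step_ren:
  assumes \<kappa>: "bij \<kappa>" and step: "ld_step P G i G1"
  shows "ld_step P (map (ren \<kappa>) G) i (map (ren \<kappa>) G1)"
proof -
  from step obtain A R \<rho> H B \<theta> where i: "i < length P" and G: "G = A # R" and \<rho>: "inj \<rho>"
    and clause: "rename_clause \<rho> (P ! i) = (H, B)"
    and disj: "(vars_trm H \<union> vars_goal B) \<inter> vars_goal G = {}"
    and mgu: "is_mgu \<theta> A H" and G1: "G1 = map (subst_trm \<theta>) (B @ R)"
    unfolding ld_step_def by blast
  have inj\<kappa>: "inj \<kappa>" using \<kappa> bij_is_inj by blast
  let ?\<theta>' = "\<lambda>y. ren \<kappa> (\<theta> (inv \<kappa> y))"
  have "subst_trm ?\<theta>' (ren \<kappa> u) = ren \<kappa> (subst_trm \<theta> u)" for u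
    using inj\<kappa> by (simp add: subst_trm_subst_trm o_def)
  then have resolvent: "map (ren \<kappa>) G1 = map (subst_trm ?\<theta>') (map (ren \<kappa>) B @ map (ren \<kappa>) R)"
    by (simp add: G1)
  have clause': "rename_clause (\<kappa> \<circ> \<rho>) (P ! i) = (ren \<kappa> H, map (ren \<kappa>) B)"
    using clause by (auto simp: rename_clause_def subst_trm_subst_trm o_def)
  have disj': "(vars_trm (ren \<kappa> H) \<union> vars_goal (map (ren \<kappa>) B)) \<inter>
      vars_goal (ren \<kappa> A # map (ren \<kappa>) R) = {}"
    using disj inj\<kappa> G by (auto simp: inj_eq)
  show ?thesis unfolding G list.map(2)
    by (rule ld_stepI[OF i inj_compose[OF inj\<kappa> \<rho>] clause' disj' is_mgu_ren[OF \<kappa> mgu] resolvent])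
qed

lemma ld_path_ren: "ld_path P G is G' \<Longrightarrow> bij \<kappa> \<Longrightarrow> ld_path P (map (ren \<kappa>) G) is (map (ren \<kappa>) G')"
  by (induction rule: ld_path.induct) (auto intro: ld_path.intros ld_step_ren)

lemma ld_path_ren_inj_on:
  assumes inj: "inj_on \<pi> (vars_goal G)" and path: "ld_path P (map (ren \<pi>) G) is G'"
  shows "\<exists>G''. ld_path P G is G''"
proof -
  obtain \<kappa> where \<kappa>: "bij \<kappa>" "\<forall>x\<in>vars_goal G. \<kappa> x = \<pi> x"
    using inj_on_extend_bij[OF finite_vars_goal inj] by blast
  have "map (ren \<pi>) G = map (ren \<kappa>) G"
    by (rule map_subst_trm_cong) (use \<kappa>(2) in auto)
  with path have "ld_path P (map (ren \<kappa>) G) is G'" by simp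
  from ld_path_ren[OF this bij_imp_bij_inv[OF \<kappa>(1)]]
  have "ld_path P (map (ren (inv \<kappa>)) (map (ren \<kappa>) G)) is (map (ren (inv \<kappa>)) G')" .
  moreover have "map (ren (inv \<kappa>)) (map (ren \<kappa>) G) = G"
    using \<kappa>(1) by (simp add: subst_trm_subst_trm o_def bij_is_inj map_idI)
  ultimately show ?thesis by metis
qed

lemma ld_path_append:
  "ld_path P G is1 G1 \<Longrightarrow> ld_path P G1 is2 G2 \<Longrightarrow> ld_path P G (is1 @ is2) G2"
  by (induction rule: ld_path.induct) (auto intro: ld_path.Cons)

lemma ld_path_indices: "ld_path P G is G' \<Longrightarrow> set is \<subseteq> {..<length P}"
  by (induction rule: ld_path.induct) (auto simp: ld_step_def)

lemma ld_tree_finite_iff_bounded: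
  "ld_tree_finite P G \<longleftrightarrow> (\<exists>d. \<forall>is G'. ld_path P G is G' \<longrightarrow> length is \<le> d)"
proof
  assume "ld_tree_finite P G"
  then have "finite (length ` ld_tree_nodes P G)" by (simp add: ld_tree_finite_def)
  then obtain d where "\<forall>n\<in>length ` ld_tree_nodes P G. n \<le> d"
    using finite_nat_set_iff_bounded_le by blast
  then show "\<exists>d. \<forall>is G'. ld_path P G is G' \<longrightarrow> length is \<le> d"
    by (auto simp: ld_tree_nodes_def)
next
  assume "\<exists>d. \<forall>is G'. ld_path P G is G' \<longrightarrow> length is \<le> d"
  then obtain d where "\<And>is G'. ld_path P G is G' \<Longrightarrow> length is \<le> d" by blast
  then have "ld_tree_nodes P G \<subseteq> {xs. set xs \<subseteq> {..<length P} \<and> length xs \<le> d}"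
    using ld_path_indices by (fastforce simp: ld_tree_nodes_def)
  moreover have "finite {xs. set xs \<subseteq> {..<length P} \<and> length xs \<le> d}"
    by (rule finite_lists_length_le) simp
  ultimately show "ld_tree_finite P G" by (simp add: ld_tree_finite_def finite_subset)
qed

lemma subst_trm_solve [simp]: "subst_trm \<sigma> (solve c) = solve (subst_trm \<sigma> c)"
  by (simp add: solve_def)

lemma vars_solve [simp]: "vars_trm (solve c) = vars_trm c"
  by (simp add: solve_def)

lemma subst_trm_encode_body: "subst_trm \<sigma> (encode_body Bs) = encode_body (map (subst_trm \<sigma>) Bs)"
  by (induction Bs rule: encode_body.induct) auto

lemma vars_encode_body: "vars_trm (encode_body Bs) = vars_goal Bs"
  by (induction Bs rule: encode_body.induct) auto

lemma vars_goal_map_lift [simp]: "vars_goal (map lift G) = vars_goal G"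
  by (induction G) auto

lemma definite_program_nth:
  "definite_program P \<Longrightarrow> i < length P \<Longrightarrow> P ! i = (H, B) \<Longrightarrow> is_atom H \<and> (\<forall>A\<in>set B. is_atom A)"
  unfolding definite_program_def by (metis (mono_tags, lifting) case_prodD nth_mem)

lemma length_M0_ce: "length (M0 @ ce P) = 3 + length P"
  by (simp add: M0_def ce_def)

lemma nth_M0_ce_clause:
  assumes "k < length P" "P ! k = (H, B)"
  shows "(M0 @ ce P) ! (3 + k) = (Fn ClauseS [lift H, encode_body (map lift B)], [])"
  using assms by (simp add: M0_def ce_def nth_append)

lemma rename_nth_M0_ce_clause:
  assumes "k < length P" "P ! k = (H, B)"
  shows "rename_clause \<rho> ((M0 @ ce P) ! (3 + k)) =
           (Fn ClauseS [lift (ren \<rho> H), encode_body (map lift (map (ren \<rho>) B))], [])"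
  using assms by (simp add: nth_M0_ce_clause rename_clause_def subst_trm_encode_body lift_subst_trm o_def)

lemma rename_nth_M0_head:
  assumes "j < 3" "rename_clause \<rho> ((M0 @ ce P) ! j) = (H, B)"
  shows "\<exists>t. H = solve t"
proof -
  have "j = 0 \<or> j = 1 \<or> j = 2" using assms(1) by auto
  then show ?thesis using assms(2) by (auto simp: M0_def rename_clause_def solve_def)
qed

lemma ld_step_M0_ce_clause_cases:
  assumes "ld_step (M0 @ ce P) MG j MG1" "3 \<le> j"
  obtains k H B where "j = 3 + k" "k < length P" "P ! k = (H, B)"
proof -
  obtain k where k: "j = 3 + k" using assms(2) le_Suc_ex by blast
  moreover have "k < length P" using assms(1) length_M0_ce[of P] k by (simp add: ld_step_def)
  moreover obtain H B where "P ! k = (H, B)" by fastforce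
  ultimately show thesis using that by blast
qed

lemma ld_step_solve_true: "ld_step (M0 @ ce P) (solve (Fn TrueS []) # MG) 0 MG"
proof -
  obtain N where N: "\<forall>y\<in>vars_goal (solve (Fn TrueS []) # MG). y < N"
    using exists_fresh_bound finite_vars_goal by blast
  show ?thesis
    by (rule ld_step_by_matching[where \<mu> = Var, OF _ _ _ N]) ((simp add: M0_def solve_def)+)
qed

lemma ld_step_solve_conj:
  "ld_step (M0 @ ce P) (solve (Fn CommaS [a, b]) # MG) 1 (solve a # solve b # MG)"
proof -
  obtain N where N: "\<forall>y\<in>vars_goal (solve (Fn CommaS [a, b]) # MG). y < N"
    using exists_fresh_bound finite_vars_goal by blast
  show ?thesis
    by (rule ld_step_by_matching[where \<mu> = "Var(0 := a, 1 := b)", OF _ _ _ N])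
      ((simp add: M0_def solve_def)+)
qed

lemma ld_step_solve_clause:
  assumes "\<forall>y\<in>vars_goal (solve A # MG). y < N"
  shows "ld_step (M0 @ ce P) (solve A # MG) 2
           (Fn ClauseS [A, Var (N + 1)] # solve (Var (N + 1)) # MG)"
  by (rule ld_step_by_matching[where \<mu> = "Var(0 := A)", OF _ _ _ assms])
    ((simp add: M0_def solve_def)+)

lemma ld_step_solve_cases:
  assumes step: "ld_step (M0 @ ce P) (solve c # MR) j MG1"
  obtains (true) \<theta> where "is_mgu \<theta> (solve c) (solve (Fn TrueS []))" "MG1 = map (subst_trm \<theta>) MR"
  | (conj) \<theta> a b where "a \<noteq> b" "a \<notin> vars_goal (solve c # MR)" "b \<notin> vars_goal (solve c # MR)"
      "is_mgu \<theta> (solve c) (solve (Fn CommaS [Var a, Var b]))"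
      "MG1 = map (subst_trm \<theta>) (solve (Var a) # solve (Var b) # MR)"
  | (clause) \<theta> a b where "a \<noteq> b" "a \<notin> vars_goal (solve c # MR)" "b \<notin> vars_goal (solve c # MR)"
      "is_mgu \<theta> (solve c) (solve (Var a))"
      "MG1 = map (subst_trm \<theta>) (Fn ClauseS [Var a, Var b] # solve (Var b) # MR)"
proof -
  obtain \<rho> H B \<theta> where \<rho>: "inj \<rho>"
    and renamed: "rename_clause \<rho> ((M0 @ ce P) ! j) = (H, B)"
    and disj: "(vars_trm H \<union> vars_goal B) \<inter> vars_goal (solve c # MR) = {}"
    and mgu: "is_mgu \<theta> (solve c) H" and MG1: "MG1 = map (subst_trm \<theta>) (B @ MR)"
    using step by (rule ld_step_ConsE)
  have "j < 3"
  proof (rule ccontr)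
    assume "\<not> j < 3"
    then obtain k H0 B0 where "j = 3 + k" "k < length P" "P ! k = (H0, B0)"
      using ld_step_M0_ce_clause_cases[OF step] by (metis not_less)
    then have "\<exists>ts. H = Fn ClauseS ts"
      using renamed rename_nth_M0_ce_clause[of k P H0 B0 \<rho>] by auto
    then show False
      using is_mgu_unifies[OF mgu] by (auto simp: solve_def)
  qed
  moreover have ab: "\<rho> 0 \<noteq> \<rho> 1" using \<rho> by (simp add: inj_eq)
  ultimately consider "j = 0" | "j = 1" | "j = 2" by linarith
  then show thesis
  proof cases
    case 1
    then have "H = solve (Fn TrueS [])" "B = []"
      using renamed by (simp_all add: M0_def rename_clause_def solve_def)
    then show thesis using true mgu MG1 by simp
  next
    case 2
    then have "H = solve (Fn CommaS [Var (\<rho> 0), Var (\<rho> 1)])"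
      "B = [solve (Var (\<rho> 0)), solve (Var (\<rho> 1))]"
      using renamed by (simp_all add: M0_def rename_clause_def solve_def)
    then show thesis using conj[OF ab] mgu MG1 disj by auto
  next
    case 3
    then have "H = solve (Var (\<rho> 0))" "B = [Fn ClauseS [Var (\<rho> 0), Var (\<rho> 1)], solve (Var (\<rho> 1))]"
      using renamed by (simp_all add: M0_def rename_clause_def solve_def)
    then show thesis using clause[OF ab] mgu MG1 disj by auto
  qed
qed

lemma ld_step_clause_cases:
  assumes step: "ld_step (M0 @ ce P) (Fn ClauseS [lift A, Var b] # MG) j MG1"
  obtains k H0 B0 \<rho> \<theta> where "k < length P" "P ! k = (H0, B0)" "inj \<rho>"
    "is_mgu \<theta> (Fn ClauseS [lift A, Var b])
       (Fn ClauseS [lift (ren \<rho> H0), encode_body (map lift (map (ren \<rho>) B0))])"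
    "(vars_trm (ren \<rho> H0) \<union> vars_goal (map (ren \<rho>) B0)) \<inter> vars_goal (Fn ClauseS [lift A, Var b] # MG) = {}"
    "MG1 = map (subst_trm \<theta>) MG"
proof -
  obtain \<rho> H B \<theta> where \<rho>: "inj \<rho>" and renamed: "rename_clause \<rho> ((M0 @ ce P) ! j) = (H, B)"
    and disj: "(vars_trm H \<union> vars_goal B) \<inter> vars_goal (Fn ClauseS [lift A, Var b] # MG) = {}"
    and mgu: "is_mgu \<theta> (Fn ClauseS [lift A, Var b]) H" and MG1: "MG1 = map (subst_trm \<theta>) (B @ MG)"
    using step by (rule ld_step_ConsE)
  have "\<not> j < 3"
    using rename_nth_M0_head[OF _ renamed] is_mgu_unifies[OF mgu] by (auto simp: solve_def)
  then obtain k H0 B0 where k: "j = 3 + k" "k < length P" "P ! k = (H0, B0)"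
    using ld_step_M0_ce_clause_cases[OF step] by (metis not_less)
  then have "H = Fn ClauseS [lift (ren \<rho> H0), encode_body (map lift (map (ren \<rho>) B0))]" "B = []"
    using renamed rename_nth_M0_ce_clause[OF k(2,3), of \<rho>] by auto
  then show thesis
    using that[OF k(2,3) \<rho>] mgu disj MG1 by (simp add: vars_encode_body del: map_map)
qed

lemma no_ld_step_clause_non_atom:
  assumes dp: "definite_program P" and f: "f = TrueS \<or> f = CommaS"
  shows "\<not> ld_step (M0 @ ce P) (Fn ClauseS [Fn f ts, v] # MG) j MG1"
proof
  assume step: "ld_step (M0 @ ce P) (Fn ClauseS [Fn f ts, v] # MG) j MG1"
  then obtain \<rho> H B \<theta> where renamed: "rename_clause \<rho> ((M0 @ ce P) ! j) = (H, B)"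
    and mgu: "is_mgu \<theta> (Fn ClauseS [Fn f ts, v]) H"
    by (rule ld_step_ConsE)
  note unif = is_mgu_unifies[OF mgu]
  show False
  proof (cases "j < 3")
    case True
    then show False using rename_nth_M0_head[OF True renamed] unif by (auto simp: solve_def)
  next
    case False
    then obtain k H0 B0 where k: "j = 3 + k" "k < length P" "P ! k = (H0, B0)"
      using ld_step_M0_ce_clause_cases[OF step] by (metis not_less)
    then obtain p us where "lift (ren \<rho> H0) = Fn (Orig p) us"
      using definite_program_nth[OF dp k(2,3)] by (auto simp: is_atom_def)
    then show False
      using renamed rename_nth_M0_ce_clause[OF k(2,3)] unif f k(1) by auto
  qed
qed

section \<open>Encoded goals and their weight\<close>

inductive encodes_body :: "'f msym trm \<Rightarrow> 'f trm list \<Rightarrow> bool" where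
  true: "encodes_body (Fn TrueS []) []"
| conj: "encodes_body a As \<Longrightarrow> encodes_body b Bs \<Longrightarrow> encodes_body (Fn CommaS [a, b]) (As @ Bs)"
| atom: "is_atom A \<Longrightarrow> encodes_body (lift A) [A]"

inductive encodes_goal :: "'f msym trm list \<Rightarrow> 'f trm list \<Rightarrow> bool" where
  Nil: "encodes_goal [] []"
| Cons: "encodes_body c As \<Longrightarrow> encodes_goal MG G \<Longrightarrow> encodes_goal (solve c # MG) (As @ G)"

lemma encodes_body_encode_body:
  "\<forall>A\<in>set Bs. is_atom A \<Longrightarrow> encodes_body (encode_body (map lift Bs)) Bs"
proof (induction Bs rule: induct_list012)
  case (3 x y zs)
  then show ?case
    using encodes_body.conj[OF encodes_body.atom, of x _ "y # zs"] by simp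
qed (auto intro: encodes_body.intros)

lemma vars_encodes_body: "encodes_body c As \<Longrightarrow> vars_trm c = vars_goal As"
  by (induction rule: encodes_body.induct) auto

lemma vars_encodes_goal: "encodes_goal MG G \<Longrightarrow> vars_goal MG = vars_goal G"
  by (induction rule: encodes_goal.induct) (auto simp: vars_encodes_body)

lemma encodes_body_subst_trm:
  "encodes_body c As \<Longrightarrow> (\<And>x. x \<in> vars_trm c \<Longrightarrow> object_trm (\<sigma> x)) \<Longrightarrow>
   encodes_body (subst_trm \<sigma> c) (map (subst_trm (unlift \<circ> \<sigma>)) As)"
proof (induction rule: encodes_body.induct)
  case (conj a As b Bs)
  then have "encodes_body (Fn CommaS [subst_trm \<sigma> a, subst_trm \<sigma> b])
      (map (subst_trm (unlift \<circ> \<sigma>)) As @ map (subst_trm (unlift \<circ> \<sigma>)) Bs)"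
    by (intro encodes_body.conj) (auto simp: o_def)
  then show ?case by (simp add: o_def)
next
  case (atom A)
  then have "subst_trm \<sigma> (lift A) = lift (subst_trm (unlift \<circ> \<sigma>) A)"
    by (intro subst_trm_lift_object) auto
  then show ?case
    using encodes_body.atom[OF is_atom_subst_trm[OF atom.hyps, of "unlift \<circ> \<sigma>"]] by (simp add: o_def)
qed (simp add: encodes_body.true)

lemma encodes_goal_subst_trm:
  "encodes_goal MG G \<Longrightarrow> (\<And>x. x \<in> vars_goal MG \<Longrightarrow> object_trm (\<sigma> x)) \<Longrightarrow>
   encodes_goal (map (subst_trm \<sigma>) MG) (map (subst_trm (unlift \<circ> \<sigma>)) G)"
proof (induction rule: encodes_goal.induct)
  case (Cons c As MG G)
  then have "encodes_goal (solve (subst_trm \<sigma> c) # map (subst_trm \<sigma>) MG)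
      (map (subst_trm (unlift \<circ> \<sigma>)) As @ map (subst_trm (unlift \<circ> \<sigma>)) G)"
    by (intro encodes_goal.Cons encodes_body_subst_trm) (auto simp: o_def)
  then show ?case by (simp add: o_def)
qed (simp add: encodes_goal.Nil)

lemma encodes_goal_ren:
  assumes "encodes_goal MG G" "\<forall>x\<in>vars_goal MG. \<theta> x = Var (\<pi> x)"
  shows "encodes_goal (map (subst_trm \<theta>) MG) (map (ren \<pi>) G)"
proof -
  have "encodes_goal (map (subst_trm \<theta>) MG) (map (subst_trm (unlift \<circ> \<theta>)) G)"
    by (rule encodes_goal_subst_trm[OF assms(1)]) (use assms(2) in auto)
  moreover have "map (subst_trm (unlift \<circ> \<theta>)) G = map (ren \<pi>) G"
    by (rule map_subst_trm_cong) (use assms vars_encodes_goal[OF assms(1)] in auto)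
  ultimately show ?thesis by simp
qed

text \<open>The number of meta steps that decompose \<open>solve c\<close> into calls \<open>clause(A, _)\<close> for its atoms.\<close>

fun body_weight :: "'f msym trm \<Rightarrow> nat" where
  "body_weight (Var x) = 0"
| "body_weight (Fn f ts) = (if f = CommaS then 1 + sum_list (map body_weight ts) else 1)"

fun solve_weight :: "'f msym trm \<Rightarrow> nat" where
  "solve_weight (Var x) = 0"
| "solve_weight (Fn f ts) = (if f = SolveS then sum_list (map body_weight ts) else 0)"

definition goal_weight :: "'f msym trm list \<Rightarrow> nat" where
  "goal_weight MG = sum_list (map solve_weight MG)"

definition body_weight_bound :: "'f clause list \<Rightarrow> nat" where
  "body_weight_bound P = (\<Sum>(H, B)\<leftarrow>P. body_weight (encode_body (map lift B)))"

lemma goal_weight_simps [simp]: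
  "goal_weight [] = 0" "goal_weight (A # MG) = solve_weight A + goal_weight MG"
  by (auto simp: goal_weight_def)

lemma solve_weight_solve [simp]: "solve_weight (solve c) = body_weight c"
  by (simp add: solve_def)

lemma body_weight_subst_trm: "encodes_body c As \<Longrightarrow> body_weight (subst_trm \<sigma> c) = body_weight c"
  by (induction rule: encodes_body.induct) (auto simp: is_atom_def)

lemma goal_weight_subst_trm: "encodes_goal MG G \<Longrightarrow> goal_weight (map (subst_trm \<sigma>) MG) = goal_weight MG"
  by (induction rule: encodes_goal.induct) (auto simp: body_weight_subst_trm)

lemma body_weight_le_bound:
  assumes "k < length P" "P ! k = (H, B)"
  shows "body_weight (encode_body (map lift B)) \<le> body_weight_bound P"
proof -
  have "body_weight (encode_body (map lift B)) = map (\<lambda>(H, B). body_weight (encode_body (map lift B))) P ! k"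
    using assms by simp
  also have "\<dots> \<le> body_weight_bound P"
    unfolding body_weight_bound_def by (rule elem_le_sum_list) (simp add: assms(1))
  finally show ?thesis .
qed

section \<open>Simulating LD-derivations of the object program\<close>

lemma ld_step_clause_lookup:
  assumes dp: "definite_program P" and i: "i < length P" and \<rho>: "inj \<rho>"
    and clause: "rename_clause \<rho> (P ! i) = (H, B)"
    and disj: "(vars_trm H \<union> vars_goal B) \<inter> vars_goal (A # R) = {}"
    and mgu: "is_mgu \<theta> A H" and enc: "encodes_goal MG R"
    and b: "b \<notin> vars_trm H \<union> vars_goal B \<union> vars_trm A \<union> vars_goal R"
  shows "\<exists>MG1. ld_step (M0 @ ce P) (Fn ClauseS [lift A, Var b] # solve (Var b) # MG) (3 + i) MG1
           \<and> encodes_goal MG1 (map (subst_trm \<theta>) (B @ R))"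
proof -
  obtain H0 B0 where P_i: "P ! i = (H0, B0)" by fastforce
  have HB: "H = ren \<rho> H0" "B = map (ren \<rho>) B0"
    using clause P_i by (auto simp: rename_clause_def)
  have atoms: "\<forall>A\<in>set B. is_atom A"
    using definite_program_nth[OF dp i P_i] HB(2) by (auto intro: is_atom_subst_trm)
  define E where "E = encode_body (map lift B)"
  have vars_E: "vars_trm E = vars_goal B"
    by (simp add: E_def vars_encode_body vars_goal_def)
  have vars_MG: "vars_goal MG = vars_goal R" using vars_encodes_goal[OF enc] .
  define W where "W = vars_trm A \<union> vars_trm H \<union> vars_goal B \<union> vars_goal R"
  obtain \<theta>' where mgu': "is_mgu \<theta>' (Fn ClauseS [lift A, Var b]) (Fn ClauseS [lift H, E])"
    and \<theta>'_b: "\<theta>' b = subst_trm (lift \<circ> \<theta>) E" and \<theta>'_W: "\<forall>x\<in>W. \<theta>' x = lift (\<theta> x)"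
    using is_mgu_clause_lift[OF mgu, of W E b] b vars_E by (auto simp: W_def)
  have "map (subst_trm \<theta>') MG = map (subst_trm (lift \<circ> \<theta>)) MG"
    by (rule map_subst_trm_cong) (use \<theta>'_W vars_MG in \<open>auto simp: W_def\<close>)
  then have resolvent: "map (subst_trm \<theta>') ([] @ solve (Var b) # MG) = map (subst_trm (lift \<circ> \<theta>)) (solve E # MG)"
    by (simp add: \<theta>'_b)
  have "ld_step (M0 @ ce P) (Fn ClauseS [lift A, Var b] # solve (Var b) # MG) (3 + i)
      (map (subst_trm (lift \<circ> \<theta>)) (solve E # MG))"
  proof (rule ld_stepI[OF _ \<rho> _ _ mgu' resolvent[symmetric]])
    show "3 + i < length (M0 @ ce P)" using i length_M0_ce[of P] by simp
    show "rename_clause \<rho> ((M0 @ ce P) ! (3 + i)) = (Fn ClauseS [lift H, E], [])"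
      using rename_nth_M0_ce_clause[OF i P_i] HB by (simp add: E_def)
    show "(vars_trm (Fn ClauseS [lift H, E]) \<union> vars_goal []) \<inter>
        vars_goal (Fn ClauseS [lift A, Var b] # solve (Var b) # MG) = {}"
      using disj b vars_E vars_MG by auto
  qed
  moreover have "encodes_goal (solve E # MG) (B @ R)"
    using encodes_goal.Cons[OF encodes_body_encode_body[OF atoms] enc] by (simp add: E_def)
  from encodes_goal_subst_trm[OF this, of "lift \<circ> \<theta>"]
  have "encodes_goal (map (subst_trm (lift \<circ> \<theta>)) (solve E # MG)) (map (subst_trm \<theta>) (B @ R))"
    by (simp add: comp_assoc[symmetric])
  ultimately show ?thesis by blast
qed

lemma ld_step_atom_simulated:
  assumes dp: "definite_program P" and step: "ld_step P (A # R) i G1" and MR: "encodes_goal MR R"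
  shows "\<exists>MG1. ld_path (M0 @ ce P) (solve (lift A) # MR) [2, 3 + i] MG1 \<and> encodes_goal MG1 G1"
proof -
  obtain \<rho> H B \<theta> where i: "i < length P" and \<rho>: "inj \<rho>" and clause: "rename_clause \<rho> (P ! i) = (H, B)"
    and disj: "(vars_trm H \<union> vars_goal B) \<inter> vars_goal (A # R) = {}"
    and mgu: "is_mgu \<theta> A H" and G1: "G1 = map (subst_trm \<theta>) (B @ R)"
    using step by (rule ld_step_ConsE)
  obtain N where N: "\<forall>y\<in>vars_goal (solve (lift A) # MR) \<union> vars_trm H \<union> vars_goal B. y < N"
    using exists_fresh_bound[of "vars_goal (solve (lift A) # MR) \<union> vars_trm H \<union> vars_goal B"] by auto
  then have "ld_step (M0 @ ce P) (solve (lift A) # MR) 2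
      (Fn ClauseS [lift A, Var (N + 1)] # solve (Var (N + 1)) # MR)"
    by (intro ld_step_solve_clause) auto
  moreover have "\<forall>y\<in>vars_trm H \<union> vars_goal B \<union> vars_trm A \<union> vars_goal R. y < N"
    using N vars_encodes_goal[OF MR] by auto
  then have "N + 1 \<notin> vars_trm H \<union> vars_goal B \<union> vars_trm A \<union> vars_goal R"
    using Suc_n_not_le_n less_imp_le by blast
  then obtain MG1 where
    "ld_step (M0 @ ce P) (Fn ClauseS [lift A, Var (N + 1)] # solve (Var (N + 1)) # MR) (3 + i) MG1"
    and "encodes_goal MG1 G1"
    using ld_step_clause_lookup[OF dp i \<rho> clause disj mgu MR] G1 by blast
  ultimately show ?thesis by (blast intro: ld_path.intros)
qed

text \<open>The induction is on the goal weight, which drops while \<open>true\<close> and conjunctions are decomposed.\<close>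

lemma ld_step_simulated:
  assumes dp: "definite_program P" and step: "ld_step P G i G1"
  shows "encodes_goal MG G \<Longrightarrow> \<exists>js MG1. ld_path (M0 @ ce P) MG js MG1 \<and> js \<noteq> [] \<and> encodes_goal MG1 G1"
proof (induction "goal_weight MG" arbitrary: MG rule: less_induct)
  case less
  from less.prems obtain c As MR R' where MG: "MG = solve c # MR" and c: "encodes_body c As"
    and MR: "encodes_goal MR R'" and G: "G = As @ R'"
    using step ld_step_Nil by (cases rule: encodes_goal.cases) auto
  have simulate_from: "\<exists>js MG1. ld_path (M0 @ ce P) MG js MG1 \<and> js \<noteq> [] \<and> encodes_goal MG1 G1"
    if "ld_step (M0 @ ce P) MG j MG'" "goal_weight MG' < goal_weight MG" "encodes_goal MG' G" for j MG'
    using less.hyps[OF that(2,3)] that(1) ld_path.Cons by blast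
  from c show ?case
  proof cases
    case true
    then have "ld_step (M0 @ ce P) MG 0 MR"
      using ld_step_solve_true MG by simp
    then show ?thesis
      using simulate_from MG MR G true by simp
  next
    case (conj a As1 b Bs1)
    have "encodes_goal (solve a # solve b # MR) G"
      using encodes_goal.Cons[OF conj(3) encodes_goal.Cons[OF conj(4) MR]] G conj(2) by simp
    moreover have "ld_step (M0 @ ce P) MG 1 (solve a # solve b # MR)"
      using ld_step_solve_conj MG conj(1) by simp
    ultimately show ?thesis
      using simulate_from MG conj(1) by simp
  next
    case (atom A)
    then show ?thesis
      using ld_step_atom_simulated[OF dp _ MR] step MG G by fastforce
  qed
qed

lemma ld_path_simulated:
  assumes dp: "definite_program P"
  shows "ld_path P G is G' \<Longrightarrow> encodes_goal MG G \<Longrightarrow>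
    \<exists>js MG'. ld_path (M0 @ ce P) MG js MG' \<and> length is \<le> length js"
proof (induction arbitrary: MG rule: ld_path.induct)
  case (Nil G)
  then show ?case using ld_path.Nil by fastforce
next
  case (Cons G i G1 "is" G')
  obtain js MG1 where js: "ld_path (M0 @ ce P) MG js MG1" "js \<noteq> []" "encodes_goal MG1 G1"
    using ld_step_simulated[OF dp Cons.hyps(1) Cons.prems] by blast
  obtain js' MG' where js': "ld_path (M0 @ ce P) MG1 js' MG'" "length is \<le> length js'"
    using Cons.IH[OF js(3)] by blast
  have "ld_path (M0 @ ce P) MG (js @ js') MG'" by (rule ld_path_append[OF js(1) js'(1)])
  moreover have "length (i # is) \<le> length (js @ js')" using js(2) js'(2) by (cases js) auto
  ultimately show ?case by blast
qed

lemma ld_tree_finite_if_meta_finite: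
  assumes "definite_program P" "encodes_goal MG G" "ld_tree_finite (M0 @ ce P) MG"
  shows "ld_tree_finite P G"
proof -
  obtain d where d: "\<And>js MG'. ld_path (M0 @ ce P) MG js MG' \<Longrightarrow> length js \<le> d"
    using assms(3) unfolding ld_tree_finite_iff_bounded by blast
  have "length is \<le> d" if "ld_path P G is G'" for "is" G'
    using ld_path_simulated[OF assms(1) that assms(2)] d by fastforce
  then show ?thesis unfolding ld_tree_finite_iff_bounded by blast
qed

section \<open>Projecting meta derivations\<close>

text \<open>The meta goals met along a meta derivation from an encoded goal: encodings, and the goals
left after the third clause of \<open>M0\<close> has resolved \<open>solve(A)\<close>, before an encoded clause is used.\<close>

definition encodes_state :: "'f msym trm list \<Rightarrow> 'f trm list \<Rightarrow> bool" where
  "encodes_state MG G \<longleftrightarrow> encodes_goal MG G \<or>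
     (\<exists>A b MR R. MG = Fn ClauseS [lift A, Var b] # solve (Var b) # MR \<and> G = A # R \<and>
        encodes_goal MR R \<and> is_atom A \<and> b \<notin> vars_trm A \<and> b \<notin> vars_goal MR)"

lemma solve_true_step_projects:
  assumes mgu: "is_mgu \<theta> (solve c) (solve (Fn TrueS []))" and MG1: "MG1 = map (subst_trm \<theta>) MR"
    and c: "encodes_body c As" and MR: "encodes_goal MR R"
  shows "\<exists>\<pi>. inj_on \<pi> (vars_goal (As @ R)) \<and> encodes_state MG1 (map (ren \<pi>) (As @ R)) \<and>
           goal_weight MG1 < goal_weight (solve c # MR)"
proof -
  have "subst_trm \<theta> c = Fn TrueS []" using is_mgu_unifies[OF mgu] by (simp add: solve_def)
  then have true: "c = Fn TrueS []" "As = []"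
    using c unfolding encodes_body.simps[of c As] by (auto dest: subst_trm_lift_atom[of _ \<theta>])
  then obtain \<pi> where \<pi>: "\<forall>x\<in>vars_goal R. \<theta> x = Var (\<pi> x)" "inj_on \<pi> (vars_goal R)"
    using is_mgu_renaming_on[OF mgu, of Var "vars_goal R"] by (auto simp: is_unifier_def)
  then have "encodes_goal MG1 (map (ren \<pi>) R)"
    using encodes_goal_ren[OF MR] vars_encodes_goal[OF MR] MG1 by auto
  then show ?thesis
    using \<pi>(2) true goal_weight_subst_trm[OF MR] MG1 by (auto simp: encodes_state_def)
qed

lemma solve_conj_step_projects:
  assumes mgu: "is_mgu \<theta> (solve c) (solve (Fn CommaS [Var a, Var b]))"
    and MG1: "MG1 = map (subst_trm \<theta>) (solve (Var a) # solve (Var b) # MR)"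
    and fresh: "a \<noteq> b" "a \<notin> vars_goal (solve c # MR)" "b \<notin> vars_goal (solve c # MR)"
    and c: "encodes_body c As" and MR: "encodes_goal MR R"
  shows "\<exists>\<pi>. inj_on \<pi> (vars_goal (As @ R)) \<and> encodes_state MG1 (map (ren \<pi>) (As @ R)) \<and>
           goal_weight MG1 < goal_weight (solve c # MR)"
proof -
  have unif: "subst_trm \<theta> c = Fn CommaS [\<theta> a, \<theta> b]"
    using is_mgu_unifies[OF mgu] by (simp add: solve_def)
  then obtain c1 c2 As1 As2 where conj: "c = Fn CommaS [c1, c2]" "As = As1 @ As2"
    and c12: "encodes_body c1 As1" "encodes_body c2 As2"
    using c unfolding encodes_body.simps[of c As] by (auto dest: subst_trm_lift_atom[of _ \<theta>])
  let ?X = "vars_goal (solve c # MR)"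
  have "subst_trm (Var(a := c1, b := c2)) c = c"
    by (rule subst_trm_id_on_vars) (use fresh in auto)
  then have "is_unifier (Var(a := c1, b := c2)) (solve c) (solve (Fn CommaS [Var a, Var b]))"
    using fresh(1) by (simp add: is_unifier_def conj solve_def)
  moreover have "(Var(a := c1, b := c2)) x = Var x" if "x \<in> ?X" for x
    using fresh that by auto
  ultimately obtain \<pi> where \<pi>: "\<forall>x\<in>?X. \<theta> x = Var (\<pi> x)" "inj_on \<pi> ?X"
    using is_mgu_renaming_on[OF mgu] by blast
  have MG1': "MG1 = map (subst_trm \<theta>) (solve c1 # solve c2 # MR)"
    using MG1 unif by (simp add: conj)
  have enc: "encodes_goal (solve c1 # solve c2 # MR) (As1 @ As2 @ R)"
    using encodes_goal.Cons[OF c12(1) encodes_goal.Cons[OF c12(2) MR]] by simp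
  then have "encodes_goal MG1 (map (ren \<pi>) (As @ R))"
    using encodes_goal_ren[OF enc, of \<theta> \<pi>] \<pi>(1) MG1' conj by auto
  moreover have "vars_goal (As @ R) = ?X"
    using vars_encodes_body[OF c] vars_encodes_goal[OF MR] by simp
  ultimately show ?thesis
    using \<pi>(2) goal_weight_subst_trm[OF enc] MG1' conj by (auto simp: encodes_state_def)
qed

lemma solve_clause_step_projects:
  assumes dp: "definite_program P" and mgu: "is_mgu \<theta> (solve c) (solve (Var a))"
    and MG1: "MG1 = map (subst_trm \<theta>) (Fn ClauseS [Var a, Var b] # solve (Var b) # MR)"
    and fresh: "a \<noteq> b" "a \<notin> vars_goal (solve c # MR)" "b \<notin> vars_goal (solve c # MR)"
    and c: "encodes_body c As" and MR: "encodes_goal MR R"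
  shows "(\<forall>j MG2. \<not> ld_step (M0 @ ce P) MG1 j MG2) \<or>
    (\<exists>\<pi>. inj_on \<pi> (vars_goal (As @ R)) \<and> encodes_state MG1 (map (ren \<pi>) (As @ R)) \<and>
         goal_weight MG1 < goal_weight (solve c # MR))"
proof -
  let ?X = "insert b (vars_goal (solve c # MR))"
  have unif: "\<theta> a = subst_trm \<theta> c" using is_mgu_unifies[OF mgu] by (simp add: solve_def)
  have "subst_trm (Var(a := c)) c = c"
    by (rule subst_trm_id_on_vars) (use fresh in auto)
  then have "is_unifier (Var(a := c)) (solve c) (solve (Var a))"
    by (simp add: is_unifier_def)
  moreover have fixes_X: "(Var(a := c)) x = Var x" if "x \<in> ?X" for x
    using fresh that by auto
  ultimately obtain \<pi> where \<pi>: "\<forall>x\<in>?X. \<theta> x = Var (\<pi> x)" "inj_on \<pi> ?X"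
    using is_mgu_renaming_on[OF mgu _ fixes_X] by blast
  have MG1': "MG1 = Fn ClauseS [subst_trm \<theta> c, Var (\<pi> b)] # solve (Var (\<pi> b)) # map (subst_trm \<theta>) MR"
    using MG1 unif \<pi>(1) by simp
  from c show ?thesis
  proof cases
    case true
    then show ?thesis using no_ld_step_clause_non_atom[OF dp] MG1' by simp
  next
    case conj
    then show ?thesis using no_ld_step_clause_non_atom[OF dp] MG1' by simp
  next
    case (atom A)
    have "subst_trm \<theta> (lift A) = ren \<pi> (lift A)"
      by (rule subst_trm_cong) (use \<pi>(1) atom in auto)
    then have MG1'': "MG1 = Fn ClauseS [lift (ren \<pi> A), Var (\<pi> b)] # solve (Var (\<pi> b)) # map (subst_trm \<theta>) MR"
      using MG1' atom by (simp add: ren_lift)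
    have "vars_goal (map (subst_trm \<theta>) MR) = \<pi> ` vars_goal MR"
      using \<pi>(1) by (auto simp: vars_goal_map_subst_trm)
    moreover have "\<pi> b \<notin> \<pi> ` (vars_trm A \<union> vars_goal MR)"
      using inj_on_image_mem_iff[OF \<pi>(2), of b "vars_trm A \<union> vars_goal MR"] fresh atom by auto
    moreover have "encodes_goal (map (subst_trm \<theta>) MR) (map (ren \<pi>) R)"
      by (rule encodes_goal_ren[OF MR]) (use \<pi>(1) in auto)
    ultimately have "encodes_state MG1 (map (ren \<pi>) (As @ R))"
      using MG1'' atom(1,2) is_atom_subst_trm[OF atom(3)] unfolding encodes_state_def by auto
    moreover have "inj_on \<pi> (vars_goal (As @ R))"
      using inj_on_subset[OF \<pi>(2)] vars_encodes_body[OF c] vars_encodes_goal[OF MR] by auto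
    moreover have "goal_weight MG1 < goal_weight (solve c # MR)"
      using MG1'' atom(1,3) goal_weight_subst_trm[OF MR] by (auto simp: solve_def is_atom_def)
    ultimately show ?thesis by blast
  qed
qed

lemma ld_step_solve_projects:
  assumes dp: "definite_program P" and step: "ld_step (M0 @ ce P) (solve c # MR) j MG1"
    and c: "encodes_body c As" and MR: "encodes_goal MR R"
  shows "(\<forall>j MG2. \<not> ld_step (M0 @ ce P) MG1 j MG2) \<or>
    (\<exists>\<pi>. inj_on \<pi> (vars_goal (As @ R)) \<and> encodes_state MG1 (map (ren \<pi>) (As @ R)) \<and>
         goal_weight MG1 < goal_weight (solve c # MR))"
  using step
proof (cases rule: ld_step_solve_cases)
  case (true \<theta>)
  then show ?thesis using solve_true_step_projects[OF _ _ c MR] by blast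
next
  case (conj \<theta> a b)
  then show ?thesis using solve_conj_step_projects[OF _ _ _ _ _ c MR] by blast
next
  case (clause \<theta> a b)
  then show ?thesis using solve_clause_step_projects[OF dp _ _ _ _ _ c MR] by blast
qed

lemma ld_step_lookup_projects:
  assumes dp: "definite_program P"
    and step: "ld_step (M0 @ ce P) (Fn ClauseS [lift A, Var b] # solve (Var b) # MR) j MG1"
    and MR: "encodes_goal MR R" and b: "b \<notin> vars_trm A" "b \<notin> vars_goal MR"
  shows "\<exists>i G1. ld_step P (A # R) i G1 \<and> encodes_state MG1 G1 \<and>
           goal_weight MG1 \<le> goal_weight MR + body_weight_bound P"
proof -
  obtain k H0 B0 \<rho> \<theta> where k: "k < length P" "P ! k = (H0, B0)" and \<rho>: "inj \<rho>"
    and mgu: "is_mgu \<theta> (Fn ClauseS [lift A, Var b])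
       (Fn ClauseS [lift (ren \<rho> H0), encode_body (map lift (map (ren \<rho>) B0))])"
    and disj: "(vars_trm (ren \<rho> H0) \<union> vars_goal (map (ren \<rho>) B0)) \<inter>
       vars_goal (Fn ClauseS [lift A, Var b] # solve (Var b) # MR) = {}"
    and MG1: "MG1 = map (subst_trm \<theta>) (solve (Var b) # MR)"
    using step by (rule ld_step_clause_cases)
  define H where "H = ren \<rho> H0"
  define B where "B = map (ren \<rho>) B0"
  define E where "E = encode_body (map lift B)"
  have atoms: "\<forall>A\<in>set B0. is_atom A" "\<forall>A\<in>set B. is_atom A"
    using definite_program_nth[OF dp k] by (auto simp: B_def intro: is_atom_subst_trm)
  have vars_E: "vars_trm E = vars_goal B" by (simp add: E_def vars_encode_body del: map_map)
  have vars_MR: "vars_goal MR = vars_goal R" using vars_encodes_goal[OF MR] .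
  define W where "W = vars_trm A \<union> vars_trm H \<union> vars_goal B \<union> vars_goal R"
  have "b \<notin> W" "b \<notin> vars_trm E" using b disj vars_E vars_MR by (auto simp: W_def H_def B_def)
  then have object: "\<forall>x. x \<noteq> b \<longrightarrow> object_trm (\<theta> x)"
    and "\<exists>\<theta>0. is_mgu \<theta>0 A H \<and> (\<forall>x\<in>W. \<theta>0 x = unlift (\<theta> x))"
    using is_mgu_clause_unlift[of \<theta> A b H E W] mgu by (auto simp: W_def H_def B_def E_def)
  then obtain \<theta>0 where mgu0: "is_mgu \<theta>0 A H" and \<theta>0: "\<forall>x\<in>W. \<theta>0 x = unlift (\<theta> x)" by blast
  have "ld_step P (A # R) k (map (subst_trm \<theta>0) (B @ R))"
    by (rule ld_stepI[OF k(1) \<rho> _ _ mgu0 refl])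
      (use k(2) disj vars_MR in \<open>auto simp: rename_clause_def H_def B_def\<close>)
  moreover have "map (subst_trm \<theta>0) (B @ R) = map (subst_trm (unlift \<circ> \<theta>)) (B @ R)"
    by (rule map_subst_trm_cong) (use \<theta>0 in \<open>auto simp: W_def\<close>)
  ultimately have object_step: "ld_step P (A # R) k (map (subst_trm (unlift \<circ> \<theta>)) (B @ R))"
    by metis
  have enc: "encodes_goal (solve E # MR) (B @ R)"
    using encodes_goal.Cons[OF encodes_body_encode_body[OF atoms(2)] MR] by (simp add: E_def)
  have MG1': "MG1 = map (subst_trm \<theta>) (solve E # MR)"
    using MG1 is_mgu_unifies[OF mgu] by (simp add: E_def B_def)
  have "encodes_goal MG1 (map (subst_trm (unlift \<circ> \<theta>)) (B @ R))"
    unfolding MG1' by (rule encodes_goal_subst_trm[OF enc]) (use object b(2) \<open>b \<notin> vars_trm E\<close> in auto)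
  then have "encodes_state MG1 (map (subst_trm (unlift \<circ> \<theta>)) (B @ R))"
    by (simp add: encodes_state_def)
  moreover have "body_weight E = body_weight (encode_body (map lift B0))"
    using body_weight_subst_trm[OF encodes_body_encode_body[OF atoms(1)], of "Var \<circ> \<rho>"]
    by (simp add: E_def B_def subst_trm_encode_body lift_subst_trm o_def)
  then have "goal_weight MG1 \<le> goal_weight MR + body_weight_bound P"
    using MG1' goal_weight_subst_trm[OF enc] body_weight_le_bound[OF k] by simp
  ultimately show ?thesis using object_step by blast
qed

text \<open>Between two steps with encoded clauses, the steps with \<open>M0\<close> decrease the goal weight, and
each step with an encoded clause raises it by at most \<open>body_weight_bound P\<close>; the summand \<open>1\<close>
pays for a last step into a dead end.\<close>

lemma meta_path_projects:
  assumes dp: "definite_program P"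
  shows "ld_path (M0 @ ce P) MG js MG' \<Longrightarrow> encodes_state MG G \<Longrightarrow>
    \<exists>is G'. ld_path P G is G' \<and> length js \<le> 1 + goal_weight MG + (body_weight_bound P + 1) * length is"
proof (induction arbitrary: G rule: ld_path.induct)
  case (Nil MG)
  then show ?case using ld_path.Nil by fastforce
next
  case (Cons MG j MG1 js MG')
  let ?K = "body_weight_bound P"
  consider (goal) "encodes_goal MG G"
    | (lookup) A b MR R where "MG = Fn ClauseS [lift A, Var b] # solve (Var b) # MR" "G = A # R"
        "encodes_goal MR R" "b \<notin> vars_trm A" "b \<notin> vars_goal MR"
    using Cons.prems unfolding encodes_state_def by blast
  then show ?case
  proof cases
    case goal
    then obtain c As MR R where MG: "MG = solve c # MR" and G: "G = As @ R"
      and c: "encodes_body c As" and MR: "encodes_goal MR R"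
      using Cons.hyps(1) ld_step_Nil by (cases rule: encodes_goal.cases) auto
    from ld_step_solve_projects[OF dp Cons.hyps(1)[unfolded MG] c MR] show ?thesis
    proof (elim disjE exE conjE)
      assume "\<forall>j MG2. \<not> ld_step (M0 @ ce P) MG1 j MG2"
      with Cons.hyps(2) have "js = []" by (auto elim: ld_path.cases)
      then show ?thesis using ld_path.Nil by fastforce
    next
      fix \<pi> assume inj: "inj_on \<pi> (vars_goal (As @ R))"
        and enc: "encodes_state MG1 (map (ren \<pi>) (As @ R))"
        and weight: "goal_weight MG1 < goal_weight (solve c # MR)"
      obtain "is" G'' where "ld_path P (map (ren \<pi>) (As @ R)) is G''"
        and "length js \<le> 1 + goal_weight MG1 + (?K + 1) * length is"
        using Cons.IH[OF enc] by blast
      then show ?thesis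
        using ld_path_ren_inj_on[OF inj] weight MG G by fastforce
    qed
  next
    case lookup
    obtain i G1 where "ld_step P G i G1" and enc: "encodes_state MG1 G1"
      and weight: "goal_weight MG1 \<le> goal_weight MG + ?K"
      using ld_step_lookup_projects[OF dp Cons.hyps(1)[unfolded lookup(1)] lookup(3-5)] lookup(1,2)
      by (auto simp: solve_def)
    moreover obtain "is" G'' where "ld_path P G1 is G''"
      and "length js \<le> 1 + goal_weight MG1 + (?K + 1) * length is"
      using Cons.IH[OF enc] by blast
    ultimately have "ld_path P G (i # is) G''"
      and "length (j # js) \<le> 1 + goal_weight MG + (?K + 1) * length (i # is)"
      by (auto intro: ld_path.Cons)
    then show ?thesis by blast
  qed
qed

lemma ld_tree_finite_meta_if_finite:
  assumes "definite_program P" "encodes_goal MG G" "ld_tree_finite P G"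
  shows "ld_tree_finite (M0 @ ce P) MG"
proof -
  let ?K = "body_weight_bound P"
  obtain d where d: "\<And>is G'. ld_path P G is G' \<Longrightarrow> length is \<le> d"
    using assms(3) unfolding ld_tree_finite_iff_bounded by blast
  have "length js \<le> 1 + goal_weight MG + (?K + 1) * d" if path: "ld_path (M0 @ ce P) MG js MG'" for js MG'
  proof -
    obtain "is" G' where "ld_path P G is G'"
      and "length js \<le> 1 + goal_weight MG + (?K + 1) * length is"
      using meta_path_projects[OF assms(1) path] assms(2) unfolding encodes_state_def by blast
    then show ?thesis using d mult_le_mono2[of "length is" d "?K + 1"] by fastforce
  qed
  then show ?thesis unfolding ld_tree_finite_iff_bounded by blast
qed

theorem mainTheorem3:
  fixes P :: "'f clause list" and Q0 :: "'f trm"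
  assumes "definite_program P"
    and "is_atom Q0"
  shows "ld_tree_finite P [Q0] \<longleftrightarrow> ld_tree_finite (M0 @ ce P) [solve (lift Q0)]"
proof -
  have "encodes_goal [solve (lift Q0)] [Q0]"
    using encodes_goal.Cons[OF encodes_body.atom[OF assms(2)] encodes_goal.Nil] by simp
  then show ?thesis
    using ld_tree_finite_meta_if_finite ld_tree_finite_if_meta_finite assms(1) by blast
qed

end
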